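(* Let $H$ be a hypergraph and let $Y \subseteq \bigcup H$ be dispensable in $H$. Then for every $Z\subseteq \bigcup H$: $Z$ is dispensable in $H$ if and only if $Z$ is dispensable in $H\cup\{Y\}$.
   Context: A hypergraph is a finite set $H$ of nonempty subsets of some finite set; its carrier is $\bigcup H$ (the union of its members), and $H$ is called a hypergraph on $\bigcup H$. The empty family $\emptyset$ is the empty hypergraph. For a family $F$ of sets and a set $Y$, let $F_Y=\{X\in F\mid X\subseteq Y\}$. A hypergraph partition of a hypergraph $H$ is a partition $\{H_1,\dots,H_n\}$ ($n\ge 0$, blocks nonempty) of the set $H$ such that $\{\bigcup H_1,\dots,\bigcup H_n\}$ is a partition of $\bigcup H$. A hypergraph is connected if it has exactly one hypergraph partition (for nonempty $H$: the graph whose vertices are the members of $H$, two being adjacent when they intersect, is connected). A subset $Y$ of $\bigcup H$ is dispensable in $H$ when $H_Y\setminus\{Y\}$ is a connected hypergraph whose carrier is exactly $Y$. *)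

theory Defs
  imports Main "HOL-Library.Disjoint_Sets"
begin

definition hypergraph :: "'a set set \<Rightarrow> bool" where
  "hypergraph H \<longleftrightarrow> finite H \<and> (\<forall>X\<in>H. X \<noteq> {} \<and> finite X)"

definition restr :: "'a set set \<Rightarrow> 'a set \<Rightarrow> 'a set set" where
  "restr F Y = {X \<in> F. X \<subseteq> Y}"

definition hyp_partition :: "'a set set \<Rightarrow> 'a set set set \<Rightarrow> bool" where
  "hyp_partition H P \<longleftrightarrow>
     partition_on H P \<and> inj_on Union P \<and> partition_on (\<Union>H) (Union ` P)"

definition hconnected :: "'a set set \<Rightarrow> bool" where
  "hconnected H \<longleftrightarrow> (\<exists>!P. hyp_partition H P)"

definition dispensable :: "'a set \<Rightarrow> 'a set set \<Rightarrow> bool" where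
  "dispensable Y H \<longleftrightarrow> Y \<subseteq> \<Union>H \<and>
     hconnected (restr H Y - {Y}) \<and> \<Union>(restr H Y - {Y}) = Y"

end

theory Submission
  imports Defs
begin

(* For a family F of nonempty sets, call a subfamily G a separator of F when the
   carrier of G is disjoint from the carrier of F - G, and call F indecomposable when its only
   separators are {} and F.  Every block of a hypergraph partition is a separator, and every
   proper nonempty separator G yields the second hypergraph partition {G, F - G}; hence
   connectedness coincides with indecomposability.
   An indecomposable subfamily B of F lies entirely on one side of every separation of F.
   Now let Y be dispensable in H, so B = H_Y - {Y} is indecomposable with carrier Y.  Adding Y
   to H changes H_Z - {Z} only when Y is a proper subset of Z, and then it inserts Y into a
   family A containing B.  Inserting a nonempty set covered by the carrier of A preserves
   indecomposability; conversely a separator of A can be chosen (up to complement) to contain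
   B, and then together with Y it separates insert Y A.  So A is connected iff insert Y A is,
   while the carrier is unchanged, which gives the theorem. *)

definition separator :: "'a set set \<Rightarrow> 'a set set \<Rightarrow> bool" where
  "separator F G \<longleftrightarrow> G \<subseteq> F \<and> \<Union>G \<inter> \<Union>(F - G) = {}"

definition indecomposable :: "'a set set \<Rightarrow> bool" where
  "indecomposable F \<longleftrightarrow> (\<forall>G. separator F G \<longrightarrow> G = {} \<or> G = F)"

lemma separator_complement: "separator F G \<Longrightarrow> separator F (F - G)"
  unfolding separator_def by blast

lemma separator_restrict: "separator F G \<Longrightarrow> F' \<subseteq> F \<Longrightarrow> separator F' (G \<inter> F')"
  unfolding separator_def by blast

lemma indecomposable_side:
  assumes "indecomposable B" "B \<subseteq> F" "separator F G"
  shows "B \<subseteq> G \<or> B \<subseteq> F - G"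
proof -
  have "separator B (G \<inter> B)" using separator_restrict[OF assms(3,2)] .
  then have "G \<inter> B = {} \<or> G \<inter> B = B" using assms(1) unfolding indecomposable_def by blast
  then show ?thesis using assms(2) by blast
qed

lemma indecomposable_insert:
  assumes indec: "indecomposable A" and "Y \<noteq> {}" "Y \<subseteq> \<Union>A"
  shows "indecomposable (insert Y A)"
  unfolding indecomposable_def
proof (intro allI impI)
  fix G assume sep: "separator (insert Y A) G"
  then have disj: "\<Union>G \<inter> \<Union>(insert Y A - G) = {}" and "G \<subseteq> insert Y A"
    unfolding separator_def by auto
  have "separator A (G \<inter> A)" using sep by (rule separator_restrict) blast
  then have "G \<inter> A = {} \<or> G \<inter> A = A" using indec unfolding indecomposable_def by blast
  then show "G = {} \<or> G = insert Y A"
  proof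
    assume "G \<inter> A = {}"
    show ?thesis
    proof (rule ccontr)
      assume "\<not> ?thesis"
      then have "G = {Y}" and "Y \<notin> A" using \<open>G \<inter> A = {}\<close> \<open>G \<subseteq> insert Y A\<close> by blast+
      then have "insert Y A - G = A" by blast
      then have "Y \<inter> \<Union>A = {}" using disj \<open>G = {Y}\<close> by simp
      then show False using \<open>Y \<noteq> {}\<close> \<open>Y \<subseteq> \<Union>A\<close> by blast
    qed
  next
    assume "G \<inter> A = A"
    then have Y_in: "Y \<subseteq> \<Union>G" using \<open>Y \<subseteq> \<Union>A\<close> by blast
    have "Y \<in> G"
    proof (rule ccontr)
      assume "Y \<notin> G"
      then have "Y \<subseteq> \<Union>(insert Y A - G)" by blast
      then show False using Y_in disj \<open>Y \<noteq> {}\<close> by blast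
    qed
    then show ?thesis using \<open>G \<inter> A = A\<close> \<open>G \<subseteq> insert Y A\<close> by blast
  qed
qed

text \<open>Conversely, removing Y keeps indecomposability as long as Y is the carrier of an
  indecomposable subfamily B: a separator of A is turned into one of insert Y A.\<close>
lemma indecomposable_remove:
  assumes indec: "indecomposable (insert Y A)"
    and B: "indecomposable B" "B \<subseteq> A" "\<Union>B = Y" and "Y \<noteq> {}"
  shows "indecomposable A"
  unfolding indecomposable_def
proof (intro allI impI)
  fix G assume sep: "separator A G"
  have "\<exists>G'. separator A G' \<and> B \<subseteq> G' \<and> (G' = G \<or> G' = A - G)"
    using indecomposable_side[OF B(1,2) sep] sep separator_complement by blast
  then obtain G' where sep': "separator A G'" and "B \<subseteq> G'" and G': "G' = G \<or> G' = A - G"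
    by blast
  then have Y_in: "Y \<subseteq> \<Union>G'" using B(3) by blast
  have G'_sub: "G' \<subseteq> A" and disj: "\<Union>G' \<inter> \<Union>(A - G') = {}"
    using sep' unfolding separator_def by auto
  have "\<Union>(insert Y G') = \<Union>G'" using Y_in by blast
  moreover have "\<Union>(insert Y A - insert Y G') \<subseteq> \<Union>(A - G')" by blast
  ultimately have "separator (insert Y A) (insert Y G')"
    using G'_sub disj unfolding separator_def by blast
  then have "insert Y G' = insert Y A" using indec unfolding indecomposable_def by blast
  then have A_sub: "A \<subseteq> insert Y G'" by (metis subset_insertI)
  have "Y \<notin> A - G'"
  proof
    assume "Y \<in> A - G'"
    then have "Y \<subseteq> \<Union>(A - G')" by blast
    then show False using disj Y_in \<open>Y \<noteq> {}\<close> by blast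
  qed
  then have "A \<subseteq> G'" using A_sub by blast
  then have "G' = A" using G'_sub by blast
  then show "G = {} \<or> G = A" using G' sep unfolding separator_def by blast
qed

lemma indecomposable_insert_iff:
  assumes "indecomposable B" "B \<subseteq> A" "\<Union>B = Y" "Y \<noteq> {}"
  shows "indecomposable (insert Y A) \<longleftrightarrow> indecomposable A"
proof
  show "indecomposable A" if "indecomposable (insert Y A)"
    using indecomposable_remove[OF that assms] .
  have "Y \<subseteq> \<Union>A" using assms(2,3) by blast
  then show "indecomposable (insert Y A)" if "indecomposable A"
    using indecomposable_insert[OF that assms(4)] by blast
qed

lemma hyp_partition_empty: "hyp_partition {} P \<longleftrightarrow> P = {}"
  unfolding hyp_partition_def by (auto simp: partition_on_empty)

lemma Union_nonempty: "F \<noteq> {} \<Longrightarrow> {} \<notin> F \<Longrightarrow> \<Union>F \<noteq> {}"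
  by auto

lemma partition_on_pair:
  assumes "A \<noteq> {}" "B \<noteq> {}" "A \<inter> B = {}"
  shows "partition_on (A \<union> B) {A, B}"
  using assms unfolding partition_on_def disjoint_def by auto

lemma hyp_partition_singleton:
  assumes "F \<noteq> {}" "{} \<notin> F"
  shows "hyp_partition F {F}"
proof -
  have "\<Union>F \<noteq> {}" using Union_nonempty assms .
  then have "partition_on (\<Union>F) (Union ` {F})" using partition_on_space[of "\<Union>F"] by simp
  moreover have "partition_on F {F}" using partition_on_space assms(1) .
  ultimately show ?thesis unfolding hyp_partition_def by simp
qed

lemma hyp_partition_split:
  assumes sep: "separator F G" and "G \<noteq> {}" "G \<noteq> F" "{} \<notin> F"
  shows "hyp_partition F {G, F - G}"
proof -
  have sub: "G \<subseteq> F" and disj: "\<Union>G \<inter> \<Union>(F - G) = {}"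
    using sep unfolding separator_def by auto
  have rest_ne: "F - G \<noteq> {}" using sub \<open>G \<noteq> F\<close> by blast
  have "{} \<notin> G" "{} \<notin> F - G" using sub \<open>{} \<notin> F\<close> by auto
  then have carrier_ne: "\<Union>G \<noteq> {}" "\<Union>(F - G) \<noteq> {}"
    using Union_nonempty[OF \<open>G \<noteq> {}\<close>] Union_nonempty[OF rest_ne] by simp_all
  have "G \<union> (F - G) = F" using sub by auto
  moreover have "G \<inter> (F - G) = {}" by auto
  ultimately have "partition_on F {G, F - G}"
    using partition_on_pair[OF \<open>G \<noteq> {}\<close> rest_ne] by simp
  moreover have "\<Union>G \<union> \<Union>(F - G) = \<Union>F" using sub by auto
  then have "partition_on (\<Union>F) (Union ` {G, F - G})"
    using partition_on_pair[OF carrier_ne disj] by simp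
  moreover have "\<Union>G \<noteq> \<Union>(F - G)" using disj carrier_ne(1) by (metis Int_absorb)
  then have "inj_on Union {G, F - G}" by (auto simp: inj_on_def)
  ultimately show ?thesis unfolding hyp_partition_def by blast
qed

text \<open>Every block of a hypergraph partition is a separator: distinct blocks have distinct,
  hence disjoint, carriers.\<close>
lemma hyp_partition_block_separator:
  assumes hp: "hyp_partition F P" and G: "G \<in> P"
  shows "separator F G"
proof -
  have p: "partition_on F P" and inj: "inj_on Union P"
    and pu: "partition_on (\<Union>F) (Union ` P)" using hp unfolding hyp_partition_def by auto
  have rest: "F - G = \<Union>(P - {G})"
    using p G unfolding partition_on_def disjoint_def by blast
  have "\<Union>G' \<inter> \<Union>G = {}" if G': "G' \<in> P - {G}" for G'
  proof -
    have "\<Union>G' \<noteq> \<Union>G" using inj G G' unfolding inj_on_def by blast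
    moreover have "\<Union>G' \<in> Union ` P" "\<Union>G \<in> Union ` P" using G G' by auto
    ultimately show ?thesis using disjointD[OF partition_onD2[OF pu]] by blast
  qed
  then show ?thesis using p G unfolding separator_def rest partition_on_def by blast
qed

lemma hconnected_iff_indecomposable:
  assumes ne: "{} \<notin> F"
  shows "hconnected F \<longleftrightarrow> indecomposable F"
proof (cases "F = {}")
  case True
  then show ?thesis
    unfolding hconnected_def indecomposable_def separator_def using hyp_partition_empty by auto
next
  case False
  have trivial: "hyp_partition F {F}" using hyp_partition_singleton[OF False ne] .
  show ?thesis
  proof
    assume conn: "hconnected F"
    show "indecomposable F" unfolding indecomposable_def
    proof (intro allI impI)
      fix G assume sep: "separator F G"
      show "G = {} \<or> G = F"
      proof (rule ccontr)
        assume "\<not> (G = {} \<or> G = F)"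
        then have "hyp_partition F {G, F - G}" and "{G, F - G} \<noteq> {F}"
          using hyp_partition_split[OF sep _ _ ne] sep unfolding separator_def by blast+
        then show False using conn trivial unfolding hconnected_def by blast
      qed
    qed
  next
    assume indec: "indecomposable F"
    have "P = {F}" if hp: "hyp_partition F P" for P
    proof -
      have "G = F" if "G \<in> P" for G
        using hyp_partition_block_separator[OF hp that] indec hp that
        unfolding indecomposable_def hyp_partition_def partition_on_def by blast
      moreover have "P \<noteq> {}" using hp False unfolding hyp_partition_def partition_on_def by blast
      ultimately show ?thesis by blast
    qed
    then show "hconnected F" unfolding hconnected_def using trivial by blast
  qed
qed

lemma restr_insert_minus:
  "restr (insert Y H) Z - {Z} =
     (if Y \<subset> Z then insert Y (restr H Z - {Z}) else restr H Z - {Z})"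
  unfolding restr_def by auto

theorem proposition4p2:
  fixes H :: "'a set set" and Y Z :: "'a set"
  assumes "hypergraph H"
    and "Y \<noteq> {}"
    and "dispensable Y H"
    and "Z \<subseteq> \<Union>H"
  shows "dispensable Z H \<longleftrightarrow> dispensable Z (H \<union> {Y})"
proof -
  define A where "A = restr H Z - {Z}"
  define B where "B = restr H Y - {Y}"
  have ne: "{} \<notin> H" using assms(1) unfolding hypergraph_def by blast
  then have A_ne: "{} \<notin> A" and B_ne: "{} \<notin> B" unfolding A_def B_def restr_def by auto
  have "Y \<subseteq> \<Union>H" and "indecomposable B" and B_carrier: "\<Union>B = Y"
    using assms(3) hconnected_iff_indecomposable[OF B_ne] unfolding dispensable_def B_def by auto
  then have carrier: "\<Union>(H \<union> {Y}) = \<Union>H" by blast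
  show ?thesis
  proof (cases "Y \<subset> Z")
    case False
    then show ?thesis unfolding dispensable_def carrier by (simp add: restr_insert_minus)
  next
    case True
    then have "B \<subseteq> A" unfolding A_def B_def restr_def by auto
    have "{} \<notin> insert Y A" using A_ne \<open>Y \<noteq> {}\<close> by simp
    then have "hconnected (insert Y A) \<longleftrightarrow> hconnected A"
      using indecomposable_insert_iff[OF \<open>indecomposable B\<close> \<open>B \<subseteq> A\<close> B_carrier \<open>Y \<noteq> {}\<close>]
      by (simp add: hconnected_iff_indecomposable A_ne)
    moreover have "\<Union>(insert Y A) = \<Union>A" using \<open>B \<subseteq> A\<close> B_carrier by auto
    ultimately show ?thesis
      using True unfolding dispensable_def carrier A_def by (simp add: restr_insert_minus)
  qed
qed

end
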